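(* In the simplified FaRMv2 protocol described in the context, every transaction $T$ (committed or aborted) works on a consistent snapshot of object values taken at its read timestamp $rts$: for every object that $T$ successfully reads, the version it reads is the latest version of that object ever written with timestamp at most $rts$, and the global time $rts$ occurs during the execution of $T$ (between its start and the completion of its read-timestamp acquisition).
   Context: Global time means the time at a distinguished clock master. Each machine has a local clock whose rate differs from that of global time by a relative factor of at most a known drift bound $\epsilon$. The function TIME() returns an interval $[L,U]$ such that the global time at the moment of the call lies in $[L,U]$. The function GET\_TS is: $[L,U] \gets \mathrm{TIME}()$; sleep for $(U-L)(1+\epsilon)$ units of local time; return $U$. The data consists of objects, each having a lock bit and a set of versions, each version tagged with a timestamp (the write timestamp of the transaction that wrote it). ReadAtTs$(R,ts)$: if $R$ is locked return NULL; otherwise return the version of $R$ with the highest timestamp $\le ts$, or NULL if none is available. LockAtTs$(R,ts)$: if $R$ is locked or $R$ has timestamp $\ge ts$ return NULL; otherwise lock $R$. A transaction with read set RSet and write set WSet executes ExecuteAndCommit(RSet, WSet): $rts \gets$ GET\_TS; for each $R\in$ RSet, if ReadAtTs$(R,rts)$ returns NULL then abort; if WSet is empty, commit (read-only transaction); otherwise for each $W\in$ WSet, if LockAtTs$(W,rts)$ returns NULL then abort; then $wts \gets$ GET\_TS (performed while holding the locks); then for each $R \in$ RSet $\setminus$ WSet, if $R$ is locked or $R$ has timestamp $> rts$, abort (validation failure); then install for each object in WSet a new version with timestamp $wts$, unlock all objects, and commit. Here $rts$ is the transaction's read timestamp and $wts$ its write timestamp. *)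

theory Defs
  imports Main "HOL.Real"
begin

(* Simplified FaRMv2 protocol as a timed interleaving transition system.
   Global time = real number 'now'. Versions are identified by
   (writer, timestamp); writer None = the initial version. *)

datatype phase = NotStarted | RtsWait | Reading | Locking | WtsWait
               | Validating | Installing | Committed | Aborted

type_synonym 't version = "'t option \<times> real"

record ('o, 't) st =
  now       :: real
  last      :: real                          (* global time of the last atomic action *)
  vers      :: "'o \<Rightarrow> 't version set"
  lck       :: "'o \<Rightarrow> 't option"
  pc        :: "'t \<Rightarrow> phase"
  tstart    :: "'t \<Rightarrow> real"                  (* global time T started *)
  slstart   :: "'t \<Rightarrow> real"                  (* global time current sleep (GET_TS) began *)
  sldur     :: "'t \<Rightarrow> real"                  (* sleep duration, in local time *)
  slU       :: "'t \<Rightarrow> real"                  (* U returned by TIME() in current GET_TS *)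
  rts       :: "'t \<Rightarrow> real"
  rtsat     :: "'t \<Rightarrow> real"                  (* global time the GET_TS for rts completed *)
  rd        :: "'t \<Rightarrow> 'o \<Rightarrow> 't version option"
  held      :: "'t \<Rightarrow> 'o set"
  wts       :: "'t \<Rightarrow> real"
  validated :: "'t \<Rightarrow> 'o set"

definition abort :: "('o,'t) st \<Rightarrow> 't \<Rightarrow> ('o,'t) st" where
  "abort s T = s(| pc := (pc s)(T := Aborted),
                   lck := (\<lambda>x. if x \<in> held s T then None else lck s x),
                   held := (held s)(T := {}) |)"

(* Atomic protocol actions of transaction T (parameters: drift bound eps,
   local clocks clk (local time of machine m at global time t), placement mach,
   read sets RS and write sets WS). *)
inductive act :: "real \<Rightarrow> ('m \<Rightarrow> real \<Rightarrow> real) \<Rightarrow> ('t \<Rightarrow> 'm) \<Rightarrow> ('t \<Rightarrow> 'o set) \<Rightarrow> ('t \<Rightarrow> 'o set)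
                   \<Rightarrow> ('o,'t) st \<Rightarrow> ('o,'t) st \<Rightarrow> bool"
  for eps clk mach RS WS where
  start: "\<lbrakk> pc s T = NotStarted; L \<le> now s; now s \<le> U \<rbrakk> \<Longrightarrow>
     act eps clk mach RS WS s (s(| pc := (pc s)(T := RtsWait), tstart := (tstart s)(T := now s),
        slstart := (slstart s)(T := now s), sldur := (sldur s)(T := (U - L) * (1 + eps)),
        slU := (slU s)(T := U) |))"
| wake_rts: "\<lbrakk> pc s T = RtsWait;
     clk (mach T) (now s) - clk (mach T) (slstart s T) \<ge> sldur s T \<rbrakk> \<Longrightarrow>
     act eps clk mach RS WS s (s(| pc := (pc s)(T := Reading), rts := (rts s)(T := slU s T),
        rtsat := (rtsat s)(T := now s) |))"
| read_ok: "\<lbrakk> pc s T = Reading; R \<in> RS T; rd s T R = None; lck s R = None;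
     v \<in> vers s R; snd v \<le> rts s T; \<forall>w\<in>vers s R. snd w \<le> rts s T \<longrightarrow> snd w \<le> snd v \<rbrakk> \<Longrightarrow>
     act eps clk mach RS WS s (s(| rd := (rd s)(T := (rd s T)(R := Some v)) |))"
| read_fail: "\<lbrakk> pc s T = Reading; R \<in> RS T; rd s T R = None;
     lck s R \<noteq> None \<or> (\<forall>w\<in>vers s R. rts s T < snd w) \<rbrakk> \<Longrightarrow>
     act eps clk mach RS WS s (abort s T)"
| reads_done: "\<lbrakk> pc s T = Reading; \<forall>R\<in>RS T. rd s T R \<noteq> None \<rbrakk> \<Longrightarrow>
     act eps clk mach RS WS s (s(| pc := (pc s)(T := (if WS T = {} then Committed else Locking)) |))"
| lock_ok: "\<lbrakk> pc s T = Locking; W \<in> WS T; W \<notin> held s T; lck s W = None;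
     \<forall>w\<in>vers s W. snd w < rts s T \<rbrakk> \<Longrightarrow>
     act eps clk mach RS WS s (s(| lck := (lck s)(W := Some T), held := (held s)(T := insert W (held s T)) |))"
| lock_fail: "\<lbrakk> pc s T = Locking; W \<in> WS T; W \<notin> held s T;
     lck s W \<noteq> None \<or> (\<exists>w\<in>vers s W. rts s T \<le> snd w) \<rbrakk> \<Longrightarrow>
     act eps clk mach RS WS s (abort s T)"
| locks_done: "\<lbrakk> pc s T = Locking; WS T \<subseteq> held s T; L \<le> now s; now s \<le> U \<rbrakk> \<Longrightarrow>
     act eps clk mach RS WS s (s(| pc := (pc s)(T := WtsWait),
        slstart := (slstart s)(T := now s), sldur := (sldur s)(T := (U - L) * (1 + eps)),
        slU := (slU s)(T := U) |))"
| wake_wts: "\<lbrakk> pc s T = WtsWait;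
     clk (mach T) (now s) - clk (mach T) (slstart s T) \<ge> sldur s T \<rbrakk> \<Longrightarrow>
     act eps clk mach RS WS s (s(| pc := (pc s)(T := Validating), wts := (wts s)(T := slU s T) |))"
| validate_ok: "\<lbrakk> pc s T = Validating; R \<in> RS T - WS T; lck s R = None;
     \<forall>w\<in>vers s R. snd w \<le> rts s T \<rbrakk> \<Longrightarrow>
     act eps clk mach RS WS s (s(| validated := (validated s)(T := insert R (validated s T)) |))"
| validate_fail: "\<lbrakk> pc s T = Validating; R \<in> RS T - WS T;
     lck s R \<noteq> None \<or> (\<exists>w\<in>vers s R. rts s T < snd w) \<rbrakk> \<Longrightarrow>
     act eps clk mach RS WS s (abort s T)"
| validated_done: "\<lbrakk> pc s T = Validating; RS T - WS T \<subseteq> validated s T \<rbrakk> \<Longrightarrow>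
     act eps clk mach RS WS s (s(| pc := (pc s)(T := Installing) |))"
| install: "\<lbrakk> pc s T = Installing; W \<in> held s T \<rbrakk> \<Longrightarrow>
     act eps clk mach RS WS s (s(| vers := (vers s)(W := insert (Some T, wts s T) (vers s W)),
        lck := (lck s)(W := None), held := (held s)(T := held s T - {W}) |))"
| install_done: "\<lbrakk> pc s T = Installing; held s T = {} \<rbrakk> \<Longrightarrow>
     act eps clk mach RS WS s (s(| pc := (pc s)(T := Committed) |))"

inductive step :: "real \<Rightarrow> ('m \<Rightarrow> real \<Rightarrow> real) \<Rightarrow> ('t \<Rightarrow> 'm) \<Rightarrow> ('t \<Rightarrow> 'o set) \<Rightarrow> ('t \<Rightarrow> 'o set)
                   \<Rightarrow> ('o,'t) st \<Rightarrow> ('o,'t) st \<Rightarrow> bool"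
  for eps clk mach RS WS where
  tick: "d > 0 \<Longrightarrow> step eps clk mach RS WS s (s(| now := now s + d |))"
| action: "\<lbrakk> last s < now s; act eps clk mach RS WS s s' \<rbrakk> \<Longrightarrow>
     step eps clk mach RS WS s (s'(| last := now s |))"

definition init :: "('o,'t) st \<Rightarrow> bool" where
  "init s \<longleftrightarrow> now s = 0 \<and> last s < now s \<and> (\<forall>R. vers s R = {(None, 0)}) \<and> (\<forall>R. lck s R = None)
     \<and> (\<forall>T. pc s T = NotStarted) \<and> (\<forall>T R. rd s T R = None) \<and> (\<forall>T. held s T = {})
     \<and> (\<forall>T. validated s T = {})"

end

theory Submission
  imports Defs
begin

(* TIME() returns an interval [L, U]
   containing the start time of T, so tstart <= U = rts; by the drift bound the sleep of
   (U - L)(1 + eps) local time lasts at least U - L global time, so GET_TS returns only after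
   global time U, giving rts <= rtsat. A successful read returns the newest version with
   timestamp <= rts, and this stays so: a writer installing a new version holds the object's
   lock, so every transaction that has read the object fixed its rts at an earlier action,
   strictly before the writer began the GET_TS for its wts; hence wts > rts. The lock
   precondition also makes each installed timestamp exceed all existing ones, so the versions
   of an object keep distinct timestamps and "newest" is well defined. *)

definition latest_upto :: "('a \<times> 'b::linorder) set \<Rightarrow> 'b \<Rightarrow> 'a \<times> 'b \<Rightarrow> bool" where
  "latest_upto V t v \<longleftrightarrow> v \<in> V \<and> snd v \<le> t \<and> (\<forall>w\<in>V. snd w \<le> t \<longrightarrow> w = v \<or> snd w < snd v)"

lemma latest_uptoI:
  assumes "inj_on snd V" "v \<in> V" "snd v \<le> t" "\<forall>w\<in>V. snd w \<le> t \<longrightarrow> snd w \<le> snd v"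
  shows "latest_upto V t v"
  using assms unfolding latest_upto_def inj_on_def by force

lemma latest_upto_insert_later:
  "latest_upto V t v \<Longrightarrow> t < snd x \<Longrightarrow> latest_upto (insert x V) t v"
  unfolding latest_upto_def by auto

lemma sleep_outlasts_uncertainty:
  fixes eps :: real
  assumes "0 \<le> eps" and "elapsed \<le> (1 + eps) * (b - a)"
    and "L \<le> a" and "(U - L) * (1 + eps) \<le> elapsed"
  shows "U \<le> b"
proof -
  have "(U - L) * (1 + eps) \<le> (b - a) * (1 + eps)" using assms(2,4) by (simp add: algebra_simps)
  then have "U - L \<le> b - a" using \<open>0 \<le> eps\<close> by (simp add: mult_le_cancel_right)
  then show ?thesis using \<open>L \<le> a\<close> by linarith
qed

(* L is the lower end of the TIME() interval of the pending GET_TS. The bounds use last, not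
   now: actions happen at strictly increasing times, so an rts fixed by an earlier action lies
   strictly before the current one. *)
definition rts_inv :: "real \<Rightarrow> ('o,'t) st \<Rightarrow> bool" where
  "rts_inv eps s \<longleftrightarrow> last s \<le> now s \<and>
     (\<forall>T. pc s T = RtsWait \<longrightarrow>
        tstart s T = slstart s T \<and> slstart s T \<le> slU s T \<and> slstart s T \<le> last s \<and>
        (\<exists>L \<le> slstart s T. sldur s T = (slU s T - L) * (1 + eps))) \<and>
     (\<forall>T. pc s T \<notin> {NotStarted, RtsWait} \<longrightarrow>
        tstart s T \<le> rts s T \<and> rts s T \<le> rtsat s T \<and> rtsat s T \<le> last s)"

definition wts_inv :: "('o,'t) st \<Rightarrow> bool" where
  "wts_inv s \<longleftrightarrow>
     (\<forall>T. pc s T = WtsWait \<longrightarrow> slstart s T \<le> slU s T \<and> rts s T < slstart s T) \<and>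
     (\<forall>T. pc s T \<in> {Validating, Installing} \<longrightarrow> rts s T < wts s T)"

definition lock_inv :: "('o,'t) st \<Rightarrow> bool" where
  "lock_inv s \<longleftrightarrow> (\<forall>T W. W \<in> held s T \<longrightarrow> lck s W = Some T \<and>
     pc s T \<in> {Locking, WtsWait, Validating, Installing} \<and> (\<forall>w\<in>vers s W. snd w < rts s T))"

definition unique_timestamps :: "('o,'t) st \<Rightarrow> bool" where
  "unique_timestamps s \<longleftrightarrow> (\<forall>R. inj_on snd (vers s R))"

definition no_reads_before_rts :: "('o,'t) st \<Rightarrow> bool" where
  "no_reads_before_rts s \<longleftrightarrow> (\<forall>T. pc s T \<in> {NotStarted, RtsWait} \<longrightarrow> rd s T = Map.empty)"

definition readers_precede_writers :: "('o,'t) st \<Rightarrow> bool" where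
  "readers_precede_writers s \<longleftrightarrow> (\<forall>T T' W. W \<in> held s T' \<longrightarrow> rd s T W \<noteq> None \<longrightarrow>
     (pc s T' = WtsWait \<longrightarrow> rts s T < slstart s T') \<and>
     (pc s T' \<in> {Validating, Installing} \<longrightarrow> rts s T < wts s T'))"

definition snapshot_inv :: "('o,'t) st \<Rightarrow> bool" where
  "snapshot_inv s \<longleftrightarrow> (\<forall>T R v. rd s T R = Some v \<longrightarrow> latest_upto (vers s R) (rts s T) v)"

definition farm_inv :: "real \<Rightarrow> ('o,'t) st \<Rightarrow> bool" where
  "farm_inv eps s \<longleftrightarrow> rts_inv eps s \<and> wts_inv s \<and> lock_inv s \<and> unique_timestamps s \<and>
     no_reads_before_rts s \<and> readers_precede_writers s \<and> snapshot_inv s"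

lemma rts_inv_rtsat_before_now:
  "rts_inv eps s \<Longrightarrow> last s < now s \<Longrightarrow> pc s T \<notin> {NotStarted, RtsWait} \<Longrightarrow>
    rts s T \<le> rtsat s T \<and> rtsat s T < now s"
  unfolding rts_inv_def by fastforce

lemma reader_started:
  "no_reads_before_rts s \<Longrightarrow> rd s T R = Some v \<Longrightarrow> pc s T \<notin> {NotStarted, RtsWait}"
  unfolding no_reads_before_rts_def by force

lemma lock_holder_unique: "lock_inv s \<Longrightarrow> W \<in> held s T \<Longrightarrow> W \<in> held s T' \<Longrightarrow> T = T'"
  unfolding lock_inv_def by (metis option.inject)

lemma held_empty_outside_lock_phases:
  "lock_inv s \<Longrightarrow> pc s T \<notin> {Locking, WtsWait, Validating, Installing} \<Longrightarrow> held s T = {}"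
  unfolding lock_inv_def by blast

lemma init_farm_inv: "init s \<Longrightarrow> farm_inv eps s"
  by (auto simp: init_def farm_inv_def rts_inv_def wts_inv_def lock_inv_def unique_timestamps_def
      no_reads_before_rts_def readers_precede_writers_def snapshot_inv_def)

lemma tick_farm_inv: "farm_inv eps s \<Longrightarrow> 0 < d \<Longrightarrow> farm_inv eps (s\<lparr>now := now s + d\<rparr>)"
  by (auto simp: farm_inv_def rts_inv_def wts_inv_def lock_inv_def unique_timestamps_def
      no_reads_before_rts_def readers_precede_writers_def snapshot_inv_def)

lemma act_rts_inv:
  assumes "0 \<le> eps" and drift: "\<forall>m t1 t2. t1 \<le> t2 \<longrightarrow> clk m t2 - clk m t1 \<le> (1 + eps) * (t2 - t1)"
    and "act eps clk mach RS WS s s'" "last s < now s" "rts_inv eps s"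
  shows "rts_inv eps (s'\<lparr>last := now s\<rparr>)"
proof -
  have before_now: "rtsat s T \<le> now s" if "pc s T \<notin> {NotStarted, RtsWait}" for T
    using rts_inv_rtsat_before_now assms(4,5) that by fastforce
  from assms(3) show ?thesis
  proof cases
    case (wake_rts T)
    from wake_rts(2) assms(5)
    obtain L where L: "L \<le> slstart s T" "sldur s T = (slU s T - L) * (1 + eps)"
      and sleeping: "tstart s T = slstart s T" "slstart s T \<le> slU s T" "slstart s T \<le> last s"
      unfolding rts_inv_def by blast
    have "clk (mach T) (now s) - clk (mach T) (slstart s T) \<le> (1 + eps) * (now s - slstart s T)"
      using drift sleeping(3) assms(4) by simp
    then have "slU s T \<le> now s"
      using sleep_outlasts_uncertainty[OF \<open>0 \<le> eps\<close> _ L(1)] L(2) wake_rts(3) by simp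
    then show ?thesis using wake_rts sleeping assms(4,5) before_now unfolding rts_inv_def by auto
  qed (use assms(4,5) before_now in \<open>auto simp: rts_inv_def abort_def\<close>)
qed

lemma act_wts_inv:
  assumes "act eps clk mach RS WS s s'" "last s < now s" "rts_inv eps s" "wts_inv s"
  shows "wts_inv (s'\<lparr>last := now s\<rparr>)"
  using assms(1)
proof cases
  case (locks_done T L U)
  then show ?thesis using rts_inv_rtsat_before_now[OF assms(3,2), of T] assms(4)
    by (auto simp: wts_inv_def)
qed (use assms(4) in \<open>auto simp: wts_inv_def abort_def\<close>)

lemma act_lock_inv:
  assumes "act eps clk mach RS WS s s'" "lock_inv s"
  shows "lock_inv (s'\<lparr>last := now s\<rparr>)"
  using assms(1)
  by cases (use assms(2) lock_holder_unique[OF assms(2)] held_empty_outside_lock_phases[OF assms(2)]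
      in \<open>auto simp: lock_inv_def abort_def\<close>)

lemma act_unique_timestamps:
  assumes "act eps clk mach RS WS s s'" "lock_inv s" "wts_inv s" "unique_timestamps s"
  shows "unique_timestamps (s'\<lparr>last := now s\<rparr>)"
  using assms(1)
proof cases
  case (install T W)
  then have "snd w < wts s T" if "w \<in> vers s W" for w
    using assms(2,3) that unfolding lock_inv_def wts_inv_def by fastforce
  then have "(a, wts s T) \<notin> vers s W" for a by fastforce
  then show ?thesis using install assms(4) by (auto simp: unique_timestamps_def)
qed (use assms(4) in \<open>auto simp: unique_timestamps_def abort_def\<close>)

lemma act_no_reads_before_rts:
  assumes "act eps clk mach RS WS s s'" "no_reads_before_rts s"
  shows "no_reads_before_rts (s'\<lparr>last := now s\<rparr>)"
  using assms(1)
  by cases (use assms(2) in \<open>auto simp: no_reads_before_rts_def abort_def\<close>)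

lemma act_readers_precede_writers:
  assumes "act eps clk mach RS WS s s'" "last s < now s" "rts_inv eps s" "wts_inv s" "lock_inv s"
    "no_reads_before_rts s" "readers_precede_writers s"
  shows "readers_precede_writers (s'\<lparr>last := now s\<rparr>)"
  using assms(1)
proof cases
  case (read_ok T R v)
  then have "R \<notin> held s T'" for T'
    using assms(5) unfolding lock_inv_def by auto
  then show ?thesis using read_ok assms(7) unfolding readers_precede_writers_def by auto
next
  case (wake_wts T)
  then have "rts s T' < slU s T" if "W \<in> held s T" "rd s T' W \<noteq> None" for T' W
    using assms(4,7) that unfolding wts_inv_def readers_precede_writers_def by fastforce
  then show ?thesis using wake_wts assms(7) unfolding readers_precede_writers_def by auto
next
  case (locks_done T L U)
  have "rts s T' < now s" if "rd s T' W \<noteq> None" for T' W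
    using rts_inv_rtsat_before_now[OF assms(3,2)] reader_started[OF assms(6)] that by fastforce
  then show ?thesis using locks_done assms(7) unfolding readers_precede_writers_def by auto
next
  case (wake_rts T)
  then have "rd s T = Map.empty" using assms(6) unfolding no_reads_before_rts_def by blast
  then show ?thesis using wake_rts assms(7) unfolding readers_precede_writers_def by auto
qed (use assms(7) in \<open>auto simp: readers_precede_writers_def abort_def\<close>)

lemma act_snapshot_inv:
  assumes "act eps clk mach RS WS s s'" "unique_timestamps s" "no_reads_before_rts s"
    "readers_precede_writers s" "snapshot_inv s"
  shows "snapshot_inv (s'\<lparr>last := now s\<rparr>)"
  using assms(1)
proof cases
  case (read_ok T R v)
  then have "latest_upto (vers s R) (rts s T) v"
    using assms(2) by (auto intro: latest_uptoI simp: unique_timestamps_def)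
  then show ?thesis using read_ok assms(5) unfolding snapshot_inv_def by auto
next
  case (wake_rts T)
  then have "rd s T = Map.empty" using assms(3) unfolding no_reads_before_rts_def by blast
  then show ?thesis using wake_rts assms(5) unfolding snapshot_inv_def by auto
next
  case (install T W)
  have "latest_upto (vers s' R) (rts s T') v" if "rd s T' R = Some v" for T' R v
  proof -
    have old: "latest_upto (vers s R) (rts s T') v"
      using assms(5) that unfolding snapshot_inv_def by blast
    show ?thesis
    proof (cases "R = W")
      case True
      then have "rts s T' < snd (Some T, wts s T)"
        using install assms(4) that unfolding readers_precede_writers_def by auto
      then show ?thesis using latest_upto_insert_later[OF old] True install by simp
    qed (use old install in simp)
  qed
  then show ?thesis using install unfolding snapshot_inv_def by simp
qed (use assms(5) in \<open>simp add: snapshot_inv_def abort_def\<close>)+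

lemma act_farm_inv:
  assumes "0 \<le> eps" and "\<forall>m t1 t2. t1 \<le> t2 \<longrightarrow> clk m t2 - clk m t1 \<le> (1 + eps) * (t2 - t1)"
    and "act eps clk mach RS WS s s'" "last s < now s" "farm_inv eps s"
  shows "farm_inv eps (s'\<lparr>last := now s\<rparr>)"
proof -
  from assms(5) have inv: "rts_inv eps s" "wts_inv s" "lock_inv s" "unique_timestamps s"
    "no_reads_before_rts s" "readers_precede_writers s" "snapshot_inv s"
    unfolding farm_inv_def by simp_all
  show ?thesis unfolding farm_inv_def
    using act_rts_inv[OF assms(1-4) inv(1)] act_wts_inv[OF assms(3,4) inv(1,2)]
      act_lock_inv[OF assms(3) inv(3)] act_unique_timestamps[OF assms(3) inv(3,2,4)]
      act_no_reads_before_rts[OF assms(3) inv(5)]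
      act_readers_precede_writers[OF assms(3,4) inv(1,2,3,5,6)]
      act_snapshot_inv[OF assms(3) inv(4,5,6,7)]
    by blast
qed

lemma reachable_farm_inv:
  assumes "0 \<le> eps" and "\<forall>m t1 t2. t1 \<le> t2 \<longrightarrow> clk m t2 - clk m t1 \<le> (1 + eps) * (t2 - t1)"
    and "init s0" and "(step eps clk mach RS WS)\<^sup>*\<^sup>* s0 s"
  shows "farm_inv eps s"
  using assms(4)
proof (induction rule: rtranclp_induct)
  case base
  show ?case using init_farm_inv[OF assms(3)] .
next
  case (step s s')
  from step.hyps(2) show ?case
    by cases (use tick_farm_inv act_farm_inv[OF assms(1,2)] step.IH in blast)+
qed

theorem lemma4:
  fixes eps :: real and clk :: "'m \<Rightarrow> real \<Rightarrow> real" and mach :: "'t \<Rightarrow> 'm"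
    and RS WS :: "'t \<Rightarrow> 'o set" and s0 s :: "('o,'t) st" and T :: 't
  assumes eps: "0 \<le> eps"
    and drift: "\<forall>m t1 t2. t1 \<le> t2 \<longrightarrow>
                 (1 - eps) * (t2 - t1) \<le> clk m t2 - clk m t1 \<and> clk m t2 - clk m t1 \<le> (1 + eps) * (t2 - t1)"
    and fin: "\<forall>T. finite (RS T) \<and> finite (WS T)"
    and "init s0"
    and "(step eps clk mach RS WS)\<^sup>*\<^sup>* s0 s"
    and "pc s T \<notin> {NotStarted, RtsWait}"
  shows "tstart s T \<le> rts s T \<and> rts s T \<le> rtsat s T \<and>
         (\<forall>R v. rd s T R = Some v \<longrightarrow>
            v \<in> vers s R \<and> snd v \<le> rts s T \<and>
            (\<forall>w\<in>vers s R. snd w \<le> rts s T \<longrightarrow> w = v \<or> snd w < snd v))"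
proof -
  \<comment> \<open>Finiteness of the read and write sets matters only for progress, not for safety.\<close>
  have "farm_inv eps s"
    using reachable_farm_inv[OF eps _ assms(4,5)] drift by blast
  then have "rts_inv eps s" "snapshot_inv s" unfolding farm_inv_def by simp_all
  then have "tstart s T \<le> rts s T \<and> rts s T \<le> rtsat s T"
    and "\<forall>R v. rd s T R = Some v \<longrightarrow> latest_upto (vers s R) (rts s T) v"
    using assms(6) unfolding rts_inv_def snapshot_inv_def by simp_all
  then show ?thesis unfolding latest_upto_def[symmetric] by simp
qed

end
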